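(* Consider the $(a,b,c)$ model with $a\le b\le c$ positive integers. There are constants $\kappa$ and $\lambda$, depending only on $a,b,c$, such that the following holds: if the cube $[0,l]^3$ is internally spanned, then for every $k\in[1,\frac{l-\lambda}{\kappa}]$ there is a rectangular block (contained in $[0,l]^3$) whose longest side has length in $[k,\kappa k+\lambda]$ and which is weakly crossed.
   Context: The $(a,b,c)$ model: the neighborhood of $(x,y,z)\in\mathbb Z^3$ consists of $(x\pm i,y,z)$, $1\le i\le a$; $(x,y\pm j,z)$, $1\le j\le b$; $(x,y,z\pm k)$, $1\le k\le c$. Given an initial set of occupied sites, the bootstrap rule repeatedly occupies every empty site having at least $a+b+c$ occupied sites in its neighborhood, until no change. A cube is internally spanned if running the bootstrap rule using only the initially occupied sites inside it results in all its sites being occupied. Weak enhancement of a set of sites $\rho$: (1) evolve by the $(a,b,c)$ bootstrap rule, taking into account only occupied sites in $\rho$; (2) then, for every site that became occupied (was initially empty), draw line segments from it to each site in its neighborhood that is occupied in the final configuration, and additionally occupy every empty site crossed by at least one such segment (such sites are called weakly spanned). A rectangular block is weakly crossed if, after weakly enhancing it, it is internally crossed in every direction, i.e. for each of the three coordinate directions there is a path of occupied sites connecting the two opposite faces of the block orthogonal to that direction. *)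

theory Defs
  imports Complex_Main
begin

type_synonym site = "int \<times> int \<times> int"

definition coord :: "nat \<Rightarrow> site \<Rightarrow> int" where
  "coord d p = (case p of (x, y, z) \<Rightarrow> if d = 0 then x else if d = 1 then y else z)"

definition nbhd :: "nat \<Rightarrow> nat \<Rightarrow> nat \<Rightarrow> site \<Rightarrow> site set" where
  "nbhd a b c p = (case p of (x, y, z) \<Rightarrow>
      {(x + i, y, z) | i. 1 \<le> \<bar>i\<bar> \<and> \<bar>i\<bar> \<le> int a}
    \<union> {(x, y + j, z) | j. 1 \<le> \<bar>j\<bar> \<and> \<bar>j\<bar> \<le> int b}
    \<union> {(x, y, z + k) | k. 1 \<le> \<bar>k\<bar> \<and> \<bar>k\<bar> \<le> int c})"

definition bp_step :: "nat \<Rightarrow> nat \<Rightarrow> nat \<Rightarrow> site set \<Rightarrow> site set" where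
  "bp_step a b c S = S \<union> {p. a + b + c \<le> card (nbhd a b c p \<inter> S)}"

definition bp_closure :: "nat \<Rightarrow> nat \<Rightarrow> nat \<Rightarrow> site set \<Rightarrow> site set" where
  "bp_closure a b c A = (\<Union>n. (bp_step a b c ^^ n) A)"

definition box :: "site \<Rightarrow> site \<Rightarrow> site set" where
  "box lo hi = {p. \<forall>d<3. coord d lo \<le> coord d p \<and> coord d p \<le> coord d hi}"

definition longest_side :: "site \<Rightarrow> site \<Rightarrow> int" where
  "longest_side lo hi = max (coord 0 hi - coord 0 lo) (max (coord 1 hi - coord 1 lo) (coord 2 hi - coord 2 lo))"

definition internally_spanned :: "nat \<Rightarrow> nat \<Rightarrow> nat \<Rightarrow> site set \<Rightarrow> site set \<Rightarrow> bool" where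
  "internally_spanned a b c A Q \<longleftrightarrow> Q \<subseteq> bp_closure a b c (A \<inter> Q)"

definition on_segment :: "site \<Rightarrow> site \<Rightarrow> site \<Rightarrow> bool" where
  "on_segment v u w \<longleftrightarrow> (\<exists>t::real. 0 \<le> t \<and> t \<le> 1 \<and>
     (\<forall>d<3. real_of_int (coord d w) = real_of_int (coord d v) + t * (real_of_int (coord d u) - real_of_int (coord d v))))"

definition weak_enhancement :: "nat \<Rightarrow> nat \<Rightarrow> nat \<Rightarrow> site set \<Rightarrow> site set" where
  "weak_enhancement a b c \<rho> = (let C = bp_closure a b c \<rho> in
     C \<union> {w. \<exists>v \<in> C - \<rho>. \<exists>u \<in> nbhd a b c v \<inter> C. on_segment v u w})"

definition nn_adj :: "site \<Rightarrow> site \<Rightarrow> bool" where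
  "nn_adj p q \<longleftrightarrow> (\<Sum>d<3. \<bar>coord d p - coord d q\<bar>) = 1"

definition crossed_in_dir :: "site set \<Rightarrow> site \<Rightarrow> site \<Rightarrow> nat \<Rightarrow> bool" where
  "crossed_in_dir S lo hi d \<longleftrightarrow> (\<exists>ps. ps \<noteq> [] \<and> set ps \<subseteq> S \<inter> box lo hi \<and>
     (\<forall>i. Suc i < length ps \<longrightarrow> nn_adj (ps ! i) (ps ! Suc i)) \<and>
     coord d (hd ps) = coord d lo \<and> coord d (last ps) = coord d hi)"

definition internally_crossed :: "site set \<Rightarrow> site \<Rightarrow> site \<Rightarrow> bool" where
  "internally_crossed S lo hi \<longleftrightarrow> (\<forall>d<3. crossed_in_dir S lo hi d)"

definition weakly_crossed :: "nat \<Rightarrow> nat \<Rightarrow> nat \<Rightarrow> site set \<Rightarrow> site \<Rightarrow> site \<Rightarrow> bool" where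
  "weakly_crossed a b c A lo hi \<longleftrightarrow>
     internally_crossed (weak_enhancement a b c (A \<inter> box lo hi)) lo hi"

end

theory Submission
  imports Defs
begin

text \<open>
  Add the sites of the final configuration one at a time, each being either initially occupied or
  having a + b + c previously occupied neighbours, and link two occupied sites when they are nearest
  neighbours or when one of them was not initially occupied and the other lies in its neighbourhood.
  Every cluster (connected component) is then internally spanned, and its bounding box is weakly
  crossed: the links of a non-initial site are exactly the segments drawn by the weak enhancement,
  so any two sites of the cluster are joined by a lattice path in the enhanced box.
  A new site only merges clusters within distance c of it, so if the merged cluster has extent
  more than 2k + 2c, one of the old clusters already had extent at least k. By induction every
  cluster of extent at least k yields a weakly crossed box with longest side in [k, 2k + 2c].
  The internally spanned cube ends up in a single cluster of extent l, so \<kappa> = 2 and \<lambda> = 2c work.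
\<close>

lemma coord_simps [simp]:
  "coord 0 (x, y, z) = x" "coord (Suc 0) (x, y, z) = y" "coord 2 (x, y, z) = z"
  by (simp_all add: coord_def)

lemma coord_eq: "coord d (x, y, z) = (if d = 0 then x else if d = 1 then y else z)"
  by (simp add: coord_def)

lemma all_less_3_iff: "(\<forall>d<3. P d) \<longleftrightarrow> P 0 \<and> P (Suc 0) \<and> P 2"
  by (auto simp: numeral_3_eq_3 numeral_2_eq_2 less_Suc_eq)

lemma mem_box_iff:
  "(x, y, z) \<in> box (x0, y0, z0) (x1, y1, z1) \<longleftrightarrow>
     x0 \<le> x \<and> x \<le> x1 \<and> y0 \<le> y \<and> y \<le> y1 \<and> z0 \<le> z \<and> z \<le> z1"
  by (simp add: box_def all_less_3_iff)

lemma finite_box: "finite (box lo hi)"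
proof -
  obtain x0 y0 z0 x1 y1 z1 where "lo = (x0, y0, z0)" "hi = (x1, y1, z1)"
    by (metis prod.exhaust)
  then have "box lo hi \<subseteq> {x0..x1} \<times> {y0..y1} \<times> {z0..z1}"
    by (auto simp: mem_box_iff)
  then show ?thesis
    by (rule finite_subset) simp
qed

lemma nbhd_eq:
  "nbhd a b c (x, y, z) =
     (\<lambda>i. (x + i, y, z)) ` {i. 1 \<le> \<bar>i\<bar> \<and> \<bar>i\<bar> \<le> int a}
   \<union> (\<lambda>j. (x, y + j, z)) ` {j. 1 \<le> \<bar>j\<bar> \<and> \<bar>j\<bar> \<le> int b}
   \<union> (\<lambda>k. (x, y, z + k)) ` {k. 1 \<le> \<bar>k\<bar> \<and> \<bar>k\<bar> \<le> int c}"
  unfolding nbhd_def by auto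

lemma finite_nbhd: "finite (nbhd a b c p)"
proof -
  have "finite {i::int. 1 \<le> \<bar>i\<bar> \<and> \<bar>i\<bar> \<le> int n}" for n
    by (rule finite_subset[of _ "{- int n .. int n}"]) auto
  then show ?thesis
    by (cases p) (simp add: nbhd_eq)
qed

lemma coord_nbhd_dist_le:
  "q \<in> nbhd a b c p \<Longrightarrow> a \<le> c \<Longrightarrow> b \<le> c \<Longrightarrow> \<bar>coord d q - coord d p\<bar> \<le> int c"
  by (cases p) (auto simp: nbhd_eq coord_eq)

text \<open>Outside a box only the neighbours along one half-axis, pointing towards the box, can lie in it.\<close>
lemma card_nbhd_inter_box_outside:
  assumes "p \<notin> box lo hi" "a \<le> c" "b \<le> c"
  shows "card (nbhd a b c p \<inter> box lo hi) \<le> c"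
proof -
  obtain x y z x0 y0 z0 x1 y1 z1 where
    p: "p = (x, y, z)" and lo: "lo = (x0, y0, z0)" and hi: "hi = (x1, y1, z1)"
    by (metis prod.exhaust)
  have "\<exists>f :: int \<Rightarrow> site. nbhd a b c p \<inter> box lo hi \<subseteq> f ` {1..int c}"
  proof -
    consider "x < x0" | "x > x1" | "y < y0" | "y > y1" | "z < z0" | "z > z1"
      using assms(1) unfolding p lo hi mem_box_iff by linarith
    then show ?thesis
    proof cases
      case 1
      with assms(2,3) show ?thesis
        by (intro exI[of _ "\<lambda>i. (x + i, y, z)"]) (auto simp: p lo hi nbhd_eq mem_box_iff)
    next
      case 2
      with assms(2,3) show ?thesis
        by (intro exI[of _ "\<lambda>i. (x - i, y, z)"])
          (auto simp: p lo hi nbhd_eq mem_box_iff image_iff intro!: bexI[where x="- _"])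
    next
      case 3
      with assms(2,3) show ?thesis
        by (intro exI[of _ "\<lambda>i. (x, y + i, z)"]) (auto simp: p lo hi nbhd_eq mem_box_iff)
    next
      case 4
      with assms(2,3) show ?thesis
        by (intro exI[of _ "\<lambda>i. (x, y - i, z)"])
          (auto simp: p lo hi nbhd_eq mem_box_iff image_iff intro!: bexI[where x="- _"])
    next
      case 5
      then show ?thesis
        by (intro exI[of _ "\<lambda>i. (x, y, z + i)"]) (auto simp: p lo hi nbhd_eq mem_box_iff)
    next
      case 6
      then show ?thesis
        by (intro exI[of _ "\<lambda>i. (x, y, z - i)"])
          (auto simp: p lo hi nbhd_eq mem_box_iff image_iff intro!: bexI[where x="- _"])
    qed
  qed
  then obtain f :: "int \<Rightarrow> site" where f: "nbhd a b c p \<inter> box lo hi \<subseteq> f ` {1..int c}" ..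
  have "card (nbhd a b c p \<inter> box lo hi) \<le> card (f ` {1..int c})"
    using f by (intro card_mono) auto
  also have "\<dots> \<le> c"
    using card_image_le[of "{1..int c}" f] by simp
  finally show ?thesis .
qed

lemma nn_adj_iff: "nn_adj (x, y, z) (x', y', z') \<longleftrightarrow> \<bar>x - x'\<bar> + \<bar>y - y'\<bar> + \<bar>z - z'\<bar> = 1"
  by (simp add: nn_adj_def numeral_3_eq_3 coord_def)

lemma nn_adj_sym: "nn_adj p q \<Longrightarrow> nn_adj q p"
  by (cases p; cases q) (simp add: nn_adj_iff abs_minus_commute)

lemma coord_nn_adj_dist_le: "nn_adj p q \<Longrightarrow> \<bar>coord d p - coord d q\<bar> \<le> 1"
  by (cases p; cases q) (auto simp: nn_adj_iff coord_eq)

section \<open>The bootstrap closure\<close>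

context
  fixes a b c :: nat
begin

lemma subset_bp_step: "S \<subseteq> bp_step a b c S"
  by (auto simp: bp_step_def)

lemma mono_bp_step: "mono (bp_step a b c)"
proof (rule monoI)
  fix S T :: "site set" assume "S \<subseteq> T"
  moreover have "card (nbhd a b c p \<inter> S) \<le> card (nbhd a b c p \<inter> T)" for p
    using \<open>S \<subseteq> T\<close> by (intro card_mono) (auto simp: finite_nbhd)
  ultimately show "bp_step a b c S \<subseteq> bp_step a b c T"
    unfolding bp_step_def using le_trans by blast
qed

lemma bp_iterate_mono:
  "m \<le> n \<Longrightarrow> S \<subseteq> T \<Longrightarrow> (bp_step a b c ^^ m) S \<subseteq> (bp_step a b c ^^ n) T"
  by (rule funpow_mono2[OF mono_bp_step _ _ subset_bp_step])

lemma bp_closure_mono: "S \<subseteq> T \<Longrightarrow> bp_closure a b c S \<subseteq> bp_closure a b c T"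
  unfolding bp_closure_def by (intro UN_mono order_refl bp_iterate_mono)

lemma subset_bp_closure: "S \<subseteq> bp_closure a b c S"
  using UN_upper[of 0 UNIV "\<lambda>n. (bp_step a b c ^^ n) S"] by (simp add: bp_closure_def)

lemma finite_subset_bp_iterate:
  assumes "finite X" "X \<subseteq> bp_closure a b c S"
  shows "\<exists>n. X \<subseteq> (bp_step a b c ^^ n) S"
  using assms
proof (induction X rule: finite_induct)
  case empty
  then show ?case by simp
next
  case (insert x X)
  then obtain n m where "X \<subseteq> (bp_step a b c ^^ n) S" "x \<in> (bp_step a b c ^^ m) S"
    by (auto simp: bp_closure_def)
  then have "insert x X \<subseteq> (bp_step a b c ^^ max n m) S"
    using bp_iterate_mono[of n "max n m" S S] bp_iterate_mono[of m "max n m" S S] by auto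
  then show ?case ..
qed

lemma mem_bp_closure_if_neighbours:
  assumes "nbhd a b c p \<inter> X \<subseteq> bp_closure a b c S" "a + b + c \<le> card (nbhd a b c p \<inter> X)"
  shows "p \<in> bp_closure a b c S"
proof -
  obtain n where n: "nbhd a b c p \<inter> X \<subseteq> (bp_step a b c ^^ n) S"
    using finite_subset_bp_iterate[OF _ assms(1)] finite_nbhd by blast
  have "card (nbhd a b c p \<inter> X) \<le> card (nbhd a b c p \<inter> (bp_step a b c ^^ n) S)"
    using n by (intro card_mono) (auto simp: finite_nbhd)
  then have "p \<in> (bp_step a b c ^^ Suc n) S"
    using assms(2) by (simp add: bp_step_def)
  then show ?thesis
    unfolding bp_closure_def by blast
qed

lemma bp_iterate_subset_box:
  assumes "0 < a" "a \<le> c" "b \<le> c" "S \<subseteq> box lo hi"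
  shows "(bp_step a b c ^^ n) S \<subseteq> box lo hi"
proof (induction n)
  case 0
  then show ?case using assms(4) by simp
next
  case (Suc n)
  have "card (nbhd a b c p \<inter> (bp_step a b c ^^ n) S) < a + b + c" if "p \<notin> box lo hi" for p
  proof -
    have "card (nbhd a b c p \<inter> (bp_step a b c ^^ n) S) \<le> card (nbhd a b c p \<inter> box lo hi)"
      using Suc.IH by (intro card_mono) (auto simp: finite_nbhd)
    also have "\<dots> \<le> c"
      using card_nbhd_inter_box_outside[OF that assms(2,3)] .
    finally show ?thesis
      using assms(1) by linarith
  qed
  moreover have "p \<in> (bp_step a b c ^^ n) S \<or> a + b + c \<le> card (nbhd a b c p \<inter> (bp_step a b c ^^ n) S)"
    if "p \<in> (bp_step a b c ^^ Suc n) S" for p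
    using that by (simp add: bp_step_def)
  ultimately show ?case
    using Suc.IH by (meson not_le subset_iff)
qed

end

section \<open>Lattice paths and segments\<close>

definition npath :: "site set \<Rightarrow> site \<Rightarrow> site \<Rightarrow> site list \<Rightarrow> bool" where
  "npath S x y ps \<longleftrightarrow> ps \<noteq> [] \<and> hd ps = x \<and> last ps = y \<and> set ps \<subseteq> S \<and> successively nn_adj ps"

lemma npath_single: "x \<in> S \<Longrightarrow> npath S x x [x]"
  by (simp add: npath_def)

lemma npath_rev: "npath S x y ps \<Longrightarrow> npath S y x (rev ps)"
  unfolding npath_def by (auto simp: hd_rev last_rev intro: successively_mono nn_adj_sym)

lemma npath_append:
  assumes "npath S x y ps" "npath S y z qs"
  shows "npath S x z (ps @ tl qs)"
proof (cases "tl qs = []")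
  case True
  then have "qs = [y]"
    using assms(2) unfolding npath_def by (cases qs) auto
  then show ?thesis
    using assms by (simp add: npath_def)
next
  case False
  then obtain qs' where qs: "qs = y # qs'" "qs' \<noteq> []"
    using assms(2) unfolding npath_def by (cases qs) auto
  then have "nn_adj y (hd qs')" "successively nn_adj qs'"
    using assms(2) by (simp_all add: npath_def successively_Cons)
  then have "successively nn_adj (ps @ qs')"
    using assms(1) qs(2) unfolding npath_def by (auto simp: successively_append_iff)
  then show ?thesis
    using assms qs unfolding npath_def by auto
qed

lemma npath_mono: "npath S x y ps \<Longrightarrow> S \<subseteq> T \<Longrightarrow> npath T x y ps"
  by (auto simp: npath_def)

lemma crossed_in_dir_if_npath:
  assumes "npath (S \<inter> box lo hi) p q ps" "coord d p = coord d lo" "coord d q = coord d hi"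
  shows "crossed_in_dir S lo hi d"
  using assms unfolding npath_def crossed_in_dir_def by (auto simp: successively_conv_nth)

definition ray_point :: "site \<Rightarrow> site \<Rightarrow> int \<Rightarrow> site" where
  "ray_point v e j = (fst v + j * fst e, fst (snd v) + j * fst (snd e), snd (snd v) + j * snd (snd e))"

lemma coord_ray_point: "coord d (ray_point v e j) = coord d v + j * coord d e"
  by (cases v; cases e) (simp add: ray_point_def coord_eq)

lemma successively_upt: "(\<And>i. P i (Suc i)) \<Longrightarrow> successively P [0..<n]"
proof (induction n)
  case (Suc n)
  then show ?case
    by (cases n) (auto simp: successively_append_iff)
qed simp

lemma ray_npath:
  assumes unit: "\<bar>fst e\<bar> + \<bar>fst (snd e)\<bar> + \<bar>snd (snd e)\<bar> = 1" and "0 < m"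
  shows "npath {w. on_segment v (ray_point v e (int m)) w} v (ray_point v e (int m))
           (map (\<lambda>n. ray_point v e (int n)) [0..<Suc m])"
proof -
  let ?u = "ray_point v e (int m)"
  have "successively nn_adj (map (\<lambda>n. ray_point v e (int n)) [0..<Suc m])"
    unfolding successively_map
  proof (rule successively_upt)
    show "nn_adj (ray_point v e (int i)) (ray_point v e (int (Suc i)))" for i
      using unit by (cases v; cases e) (simp add: ray_point_def nn_adj_iff algebra_simps)
  qed
  moreover have "on_segment v ?u (ray_point v e (int n))" if "n \<le> m" for n
    unfolding on_segment_def
  proof (intro exI[of _ "real n / real m"] conjI allI impI)
    show "real n / real m \<le> 1"
      using that \<open>0 < m\<close> by simp
    show "real_of_int (coord d (ray_point v e (int n))) =
        real_of_int (coord d v) + real n / real m * (real_of_int (coord d ?u) - real_of_int (coord d v))"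
      for d
      using \<open>0 < m\<close> by (simp add: coord_ray_point)
  qed simp
  moreover have "hd (map (\<lambda>n. ray_point v e (int n)) [0..<Suc m]) = v"
    by (cases v) (simp add: ray_point_def upt_conv_Cons del: upt_Suc)
  moreover have "last (map (\<lambda>n. ray_point v e (int n)) [0..<Suc m]) = ?u"
    by simp
  ultimately show ?thesis
    unfolding npath_def by (auto simp: less_Suc_eq_le simp del: upt_Suc)
qed

lemma nbhd_eq_ray_point:
  assumes "u \<in> nbhd a b c v"
  obtains e m where "\<bar>fst e\<bar> + \<bar>fst (snd e)\<bar> + \<bar>snd (snd e)\<bar> = 1" "0 < m" "u = ray_point v e (int m)"
proof -
  obtain x y z where v: "v = (x, y, z)"
    by (cases v) auto
  have "\<exists>e m. \<bar>fst e\<bar> + \<bar>fst (snd e)\<bar> + \<bar>snd (snd e)\<bar> = 1 \<and> 0 < m \<and> u = ray_point v e (int m)"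
    using assms[unfolded v nbhd_eq]
  proof (elim UnE imageE)
    fix i assume "i \<in> {i. 1 \<le> \<bar>i\<bar> \<and> \<bar>i\<bar> \<le> int a}" "u = (x + i, y, z)"
    then show ?thesis
      by (intro exI[of _ "(sgn i, 0, 0)"] exI[of _ "nat \<bar>i\<bar>"]) (auto simp: v ray_point_def abs_sgn_eq sgn_if)
  next
    fix i assume "i \<in> {i. 1 \<le> \<bar>i\<bar> \<and> \<bar>i\<bar> \<le> int b}" "u = (x, y + i, z)"
    then show ?thesis
      by (intro exI[of _ "(0, sgn i, 0)"] exI[of _ "nat \<bar>i\<bar>"]) (auto simp: v ray_point_def abs_sgn_eq sgn_if)
  next
    fix i assume "i \<in> {i. 1 \<le> \<bar>i\<bar> \<and> \<bar>i\<bar> \<le> int c}" "u = (x, y, z + i)"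
    then show ?thesis
      by (intro exI[of _ "(0, 0, sgn i)"] exI[of _ "nat \<bar>i\<bar>"]) (auto simp: v ray_point_def abs_sgn_eq sgn_if)
  qed
  with that show ?thesis
    by blast
qed

lemma nbhd_segment_npath:
  assumes "u \<in> nbhd a b c v"
  shows "\<exists>ps. npath {w. on_segment v u w} v u ps"
  using ray_npath by (metis nbhd_eq_ray_point[OF assms])

lemma on_segment_in_box:
  assumes "on_segment v u w" "v \<in> box lo hi" "u \<in> box lo hi"
  shows "w \<in> box lo hi"
proof -
  obtain t :: real where t: "0 \<le> t" "t \<le> 1" and w: "\<forall>d<3. real_of_int (coord d w) =
      real_of_int (coord d v) + t * (real_of_int (coord d u) - real_of_int (coord d v))"
    using assms(1) unfolding on_segment_def by blast
  have convex: "L \<le> V + t * (U - V) \<and> V + t * (U - V) \<le> H"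
    if "L \<le> V" "V \<le> H" "L \<le> U" "U \<le> H" for L V U H :: real
    using that t
    by (smt (verit) mult_le_cancel_right1 mult_left_le_one_le
        ordered_comm_semiring_class.comm_mult_left_mono)
  have "real_of_int (coord d lo) \<le> real_of_int (coord d w) \<and> real_of_int (coord d w) \<le> real_of_int (coord d hi)"
    if "d < 3" for d
    using convex[of "coord d lo" "coord d v" "coord d hi" "coord d u"] w assms(2,3) that
    by (simp add: box_def)
  then show ?thesis
    by (simp add: box_def)
qed

definition bbox_lo :: "site set \<Rightarrow> site" where
  "bbox_lo K = (Min (coord 0 ` K), Min (coord 1 ` K), Min (coord 2 ` K))"

definition bbox_hi :: "site set \<Rightarrow> site" where
  "bbox_hi K = (Max (coord 0 ` K), Max (coord 1 ` K), Max (coord 2 ` K))"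

definition extent :: "site set \<Rightarrow> int" where
  "extent K = longest_side (bbox_lo K) (bbox_hi K)"

lemma less_3_cases: "d < (3::nat) \<Longrightarrow> d = 0 \<or> d = 1 \<or> d = 2"
  by auto

lemma coord_bbox_lo: "d < 3 \<Longrightarrow> coord d (bbox_lo K) = Min (coord d ` K)"
  using less_3_cases[of d] by (auto simp: bbox_lo_def)

lemma coord_bbox_hi: "d < 3 \<Longrightarrow> coord d (bbox_hi K) = Max (coord d ` K)"
  using less_3_cases[of d] by (auto simp: bbox_hi_def)

lemma coord_Min_attained:
  assumes "finite K" "K \<noteq> {}"
  shows "\<exists>p\<in>K. coord d p = Min (coord d ` K)"
proof -
  have "Min (coord d ` K) \<in> coord d ` K"
    using assms by simp
  then show ?thesis
    by (metis imageE)
qed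

lemma coord_Max_attained:
  assumes "finite K" "K \<noteq> {}"
  shows "\<exists>p\<in>K. coord d p = Max (coord d ` K)"
proof -
  have "Max (coord d ` K) \<in> coord d ` K"
    using assms by simp
  then show ?thesis
    by (metis imageE)
qed

lemma subset_box_bbox: "finite K \<Longrightarrow> K \<subseteq> box (bbox_lo K) (bbox_hi K)"
  by (auto simp: box_def coord_bbox_lo coord_bbox_hi)

lemma bbox_ordered:
  "finite K \<Longrightarrow> K \<noteq> {} \<Longrightarrow> \<forall>d<3. coord d (bbox_lo K) \<le> coord d (bbox_hi K)"
  by (auto simp: coord_bbox_lo coord_bbox_hi intro: order_trans[OF Min_le Max_ge])

lemma bbox_subset_box:
  assumes "finite K" "K \<noteq> {}" "K \<subseteq> box lo hi"
  shows "box (bbox_lo K) (bbox_hi K) \<subseteq> box lo hi"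
proof
  fix w assume w: "w \<in> box (bbox_lo K) (bbox_hi K)"
  have "coord d lo \<le> coord d w \<and> coord d w \<le> coord d hi" if "d < 3" for d
  proof -
    have "Min (coord d ` K) \<in> coord d ` K" "Max (coord d ` K) \<in> coord d ` K"
      using assms(1,2) by (simp_all add: Min_in Max_in)
    then have "coord d lo \<le> Min (coord d ` K)" "Max (coord d ` K) \<le> coord d hi"
      using assms(3) that by (auto simp: box_def)
    then show ?thesis
      using w that by (auto simp: box_def coord_bbox_lo coord_bbox_hi)
  qed
  then show "w \<in> box lo hi"
    by (simp add: box_def)
qed

lemma coord_dist_le_extent:
  assumes "finite K" "p \<in> K" "q \<in> K" "d < 3"
  shows "coord d q - coord d p \<le> extent K"
proof -
  have "coord d q - coord d p \<le> coord d (bbox_hi K) - coord d (bbox_lo K)"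
    using assms by (simp add: coord_bbox_lo coord_bbox_hi diff_mono)
  also have "\<dots> \<le> extent K"
    using less_3_cases[OF assms(4)] by (auto simp: extent_def longest_side_def)
  finally show ?thesis .
qed

lemma extent_attained:
  assumes "finite K" "K \<noteq> {}"
  shows "\<exists>p\<in>K. \<exists>q\<in>K. \<exists>d<3. extent K = coord d q - coord d p"
proof -
  have "\<exists>d\<in>{0, 1, 2}. extent K = coord d (bbox_hi K) - coord d (bbox_lo K)"
    by (auto simp: extent_def longest_side_def max_def)
  then obtain d where d: "d \<in> {0, 1, 2}" "extent K = coord d (bbox_hi K) - coord d (bbox_lo K)" ..
  obtain p q where pq: "p \<in> K" "coord d p = Min (coord d ` K)" "q \<in> K" "coord d q = Max (coord d ` K)"
    using coord_Min_attained[OF assms] coord_Max_attained[OF assms] by blast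
  have "d < 3"
    using d(1) by auto
  then have "extent K = coord d q - coord d p"
    using d(2) pq by (simp add: coord_bbox_lo coord_bbox_hi)
  with pq \<open>d < 3\<close> show ?thesis
    by blast
qed

lemma bbox_internally_crossed:
  assumes "finite K" "K \<noteq> {}"
    and paths: "\<And>p q. p \<in> K \<Longrightarrow> q \<in> K \<Longrightarrow> \<exists>ps. npath (S \<inter> box (bbox_lo K) (bbox_hi K)) p q ps"
  shows "internally_crossed S (bbox_lo K) (bbox_hi K)"
  unfolding internally_crossed_def
proof (intro allI impI)
  fix d :: nat assume "d < 3"
  obtain p q where "p \<in> K" "coord d p = Min (coord d ` K)" "q \<in> K" "coord d q = Max (coord d ` K)"
    using coord_Min_attained[OF assms(1,2)] coord_Max_attained[OF assms(1,2)] by blast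
  then show "crossed_in_dir S (bbox_lo K) (bbox_hi K) d"
    using paths crossed_in_dir_if_npath \<open>d < 3\<close> by (metis coord_bbox_lo coord_bbox_hi)
qed

section \<open>Components of a graph restricted to a vertex set\<close>

definition induced :: "('a \<Rightarrow> 'a \<Rightarrow> bool) \<Rightarrow> 'a set \<Rightarrow> 'a \<Rightarrow> 'a \<Rightarrow> bool" where
  "induced R D x y \<longleftrightarrow> x \<in> D \<and> y \<in> D \<and> R x y"

definition component :: "('a \<Rightarrow> 'a \<Rightarrow> bool) \<Rightarrow> 'a set \<Rightarrow> 'a \<Rightarrow> 'a set" where
  "component R D p = {q. (induced R D)\<^sup>*\<^sup>* p q}"

lemma self_in_component: "p \<in> component R D p"
  by (simp add: component_def)

lemma component_subset:
  assumes "p \<in> D"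
  shows "component R D p \<subseteq> D"
proof -
  have "q \<in> D" if "(induced R D)\<^sup>*\<^sup>* p q" for q
    using that assms by (induction rule: rtranclp_induct) (auto simp: induced_def)
  then show ?thesis
    by (auto simp: component_def)
qed

lemma component_mono:
  assumes "D \<subseteq> D'"
  shows "component R D p \<subseteq> component R D' p"
proof -
  have "induced R D \<le> induced R D'"
    using assms by (auto simp: induced_def)
  then show ?thesis
    unfolding component_def by (blast intro: predicate2D[OF rtranclp_mono[OF \<open>induced R D \<le> induced R D'\<close>]])
qed

lemma component_eq:
  assumes "symp R" "q \<in> component R D p"
  shows "component R D q = component R D p"
proof -
  have "symp (induced R D)"
    using assms(1) by (auto simp: symp_def induced_def)
  have pq: "(induced R D)\<^sup>*\<^sup>* p q"
    using assms(2) by (simp add: component_def)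
  then have qp: "(induced R D)\<^sup>*\<^sup>* q p"
    by (rule sympD[OF symp_rtranclp[OF \<open>symp (induced R D)\<close>]])
  have "(induced R D)\<^sup>*\<^sup>* q x \<longleftrightarrow> (induced R D)\<^sup>*\<^sup>* p x" for x
    by (meson pq qp rtranclp_trans)
  then show ?thesis
    by (simp add: component_def)
qed

lemma component_insert_eq:
  assumes "v \<notin> component R (insert v D) p"
  shows "component R (insert v D) p = component R D p"
proof
  have "(induced R D)\<^sup>*\<^sup>* p q" if "(induced R (insert v D))\<^sup>*\<^sup>* p q" for q
    using that
  proof (induction rule: rtranclp_induct)
    case (step y z)
    then have "y \<in> component R (insert v D) p" "z \<in> component R (insert v D) p"
      using rtranclp.rtrancl_into_rtrancl[OF step(1,2)] by (simp_all add: component_def)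
    then have "induced R D y z"
      using assms step(2) by (auto simp: induced_def)
    with step.IH show ?case
      by (rule rtranclp.rtrancl_into_rtrancl)
  qed simp
  then show "component R (insert v D) p \<subseteq> component R D p"
    by (auto simp: component_def)
qed (rule component_mono, blast)

lemma component_insert_subset:
  "component R (insert v D) v \<subseteq> insert v (\<Union>w \<in> {w \<in> D. R v w}. component R D w)"
proof -
  have "q \<in> insert v (\<Union>w \<in> {w \<in> D. R v w}. component R D w)"
    if "(induced R (insert v D))\<^sup>*\<^sup>* v q" for q
    using that
  proof (induction rule: rtranclp_induct)
    case (step y z)
    show ?case
    proof (cases "z = v \<or> y = v")
      case True
      with step(2) show ?thesis
        by (auto simp: induced_def intro: self_in_component)
    next
      case False
      then have "induced R D y z"
        using step(2) by (auto simp: induced_def)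
      obtain w where "w \<in> D" "R v w" "(induced R D)\<^sup>*\<^sup>* w y"
        using False step(3) by (auto simp: component_def)
      moreover have "z \<in> component R D w"
        using rtranclp.rtrancl_into_rtrancl[OF calculation(3) \<open>induced R D y z\<close>]
        by (simp add: component_def)
      ultimately show ?thesis
        by blast
    qed
  qed simp
  then show ?thesis
    by (auto simp: component_def)
qed

lemma component_subset_component_insert:
  assumes "w \<in> D" "R v w"
  shows "component R D w \<subseteq> component R (insert v D) v"
proof
  fix q assume "q \<in> component R D w"
  then have "(induced R (insert v D))\<^sup>*\<^sup>* w q"
    using component_mono[of D "insert v D" R w] by (auto simp: component_def)
  moreover have "induced R (insert v D) v w"
    using assms by (simp add: induced_def)
  ultimately show "q \<in> component R (insert v D) v"
    by (simp add: component_def converse_rtranclp_into_rtranclp)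
qed

lemma npath_in_component:
  assumes edges: "\<And>y z. y \<in> component R D p \<Longrightarrow> z \<in> component R D p \<Longrightarrow> R y z \<Longrightarrow> \<exists>ps. npath S y z ps"
    and "p \<in> S" "q \<in> component R D p" "q' \<in> component R D p"
  shows "\<exists>ps. npath S q q' ps"
proof -
  have "\<exists>ps. npath S p q ps" if "(induced R D)\<^sup>*\<^sup>* p q" for q
    using that
  proof (induction rule: rtranclp_induct)
    case base
    then show ?case
      using \<open>p \<in> S\<close> npath_single by blast
  next
    case (step y z)
    have "y \<in> component R D p" "z \<in> component R D p"
      using step(1) rtranclp.rtrancl_into_rtrancl[OF step(1,2)] by (simp_all add: component_def)
    moreover have "R y z"
      using step(2) by (simp add: induced_def)
    ultimately obtain qs where "npath S y z qs"
      using edges by blast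
    with step(3) show ?case
      using npath_append by blast
  qed
  moreover have "(induced R D)\<^sup>*\<^sup>* p q" "(induced R D)\<^sup>*\<^sup>* p q'"
    using assms(3,4) by (simp_all add: component_def)
  ultimately obtain ps ps' where "npath S p q ps" "npath S p q' ps'"
    by blast
  then show ?thesis
    using npath_append[OF npath_rev] by blast
qed

section \<open>Clusters of a growing configuration in a cube\<close>

locale bootstrap_cube =
  fixes a b c :: nat and A :: "site set" and l :: nat
  assumes a_pos: "0 < a" and a_le_b: "a \<le> b" and b_le_c: "b \<le> c"
begin

abbreviation cube :: "site set" where
  "cube \<equiv> box (0, 0, 0) (int l, int l, int l)"

abbreviation seeds :: "site set" where
  "seeds \<equiv> A \<inter> cube"

text \<open>A site that is not initially occupied is linked to every site of its neighbourhood; these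
  links are the segments drawn by the weak enhancement.\<close>
definition linked :: "site \<Rightarrow> site \<Rightarrow> bool" where
  "linked p q \<longleftrightarrow> nn_adj p q \<or> (p \<notin> seeds \<and> q \<in> nbhd a b c p) \<or> (q \<notin> seeds \<and> p \<in> nbhd a b c q)"

abbreviation cluster :: "site set \<Rightarrow> site \<Rightarrow> site set" where
  "cluster D p \<equiv> component linked D p"

lemma symp_linked: "symp linked"
  unfolding linked_def symp_def using nn_adj_sym by blast

lemma coord_dist_le_if_linked:
  assumes "linked p q"
  shows "\<bar>coord d p - coord d q\<bar> \<le> int c"
proof -
  have "1 \<le> c"
    using a_pos a_le_b b_le_c by simp
  then show ?thesis
    using assms a_le_b b_le_c coord_nn_adj_dist_le[of p q d]
      coord_nbhd_dist_le[of q a b c p d] coord_nbhd_dist_le[of p a b c q d]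
    unfolding linked_def by (auto simp: abs_minus_commute)
qed

inductive grown :: "site set \<Rightarrow> bool" where
  grown_empty: "grown {}"
| grown_insert: "grown D \<Longrightarrow> v \<in> seeds \<or> a + b + c \<le> card (nbhd a b c v \<inter> D) \<Longrightarrow> grown (insert v D)"

lemma grown_subset_cube: "grown D \<Longrightarrow> D \<subseteq> cube"
proof (induction rule: grown.induct)
  case (grown_insert D v)
  have "v \<in> cube"
  proof (rule ccontr)
    assume "v \<notin> cube"
    have "card (nbhd a b c v \<inter> D) \<le> card (nbhd a b c v \<inter> cube)"
      using grown_insert.IH by (intro card_mono) (auto simp: finite_nbhd)
    also have "\<dots> \<le> c"
      using card_nbhd_inter_box_outside[OF \<open>v \<notin> cube\<close>] a_le_b b_le_c by simp
    finally show False
      using grown_insert.hyps(2) \<open>v \<notin> cube\<close> a_pos by simp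
  qed
  with grown_insert.IH show ?case
    by simp
qed simp

lemma grown_union:
  assumes "grown D" "finite X" "\<forall>x\<in>X. x \<in> seeds \<or> a + b + c \<le> card (nbhd a b c x \<inter> D)"
  shows "grown (D \<union> X)"
  using assms(2,3)
proof (induction X rule: finite_induct)
  case (insert x X)
  have "card (nbhd a b c x \<inter> D) \<le> card (nbhd a b c x \<inter> (D \<union> X))"
    by (intro card_mono) (auto simp: finite_nbhd)
  then have "x \<in> seeds \<or> a + b + c \<le> card (nbhd a b c x \<inter> (D \<union> X))"
    using insert.prems by auto
  moreover have "grown (D \<union> X)"
    using insert.IH insert.prems by simp
  ultimately have "grown (insert x (D \<union> X))"
    by (rule grown_insert[rotated])
  then show ?case
    by simp
qed (simp add: assms(1))

lemma grown_bp_iterate: "grown ((bp_step a b c ^^ n) seeds)"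
proof (induction n)
  case 0
  have "grown ({} \<union> seeds)"
    by (rule grown_union[OF grown_empty finite_subset[OF Int_lower2 finite_box]]) simp
  then show ?case
    by simp
next
  case (Suc n)
  let ?S = "(bp_step a b c ^^ n) seeds"
  let ?X = "{p. a + b + c \<le> card (nbhd a b c p \<inter> ?S)}"
  have step: "(bp_step a b c ^^ Suc n) seeds = ?S \<union> ?X"
    by (simp add: bp_step_def)
  have "(bp_step a b c ^^ Suc n) seeds \<subseteq> cube"
    by (rule bp_iterate_subset_box[OF a_pos order_trans[OF a_le_b b_le_c] b_le_c Int_lower2])
  then have "finite ?X"
    unfolding step using finite_subset[OF _ finite_box] by blast
  then have "grown (?S \<union> ?X)"
    by (rule grown_union[OF Suc.IH]) simp
  then show ?case
    by (simp only: step)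
qed

lemma cluster_subset_cube: "grown D \<Longrightarrow> p \<in> D \<Longrightarrow> cluster D p \<subseteq> cube"
  using component_subset[of p D linked] grown_subset_cube by blast

lemma finite_cluster: "grown D \<Longrightarrow> p \<in> D \<Longrightarrow> finite (cluster D p)"
  using finite_subset[OF cluster_subset_cube finite_box] .

definition crossed_subbox :: "site \<Rightarrow> site \<Rightarrow> bool" where
  "crossed_subbox lo hi \<longleftrightarrow>
     (\<forall>d<3. coord d lo \<le> coord d hi) \<and> box lo hi \<subseteq> cube \<and> weakly_crossed a b c A lo hi"

lemma spanned_subset_weak_enhancement:
  assumes "K \<subseteq> box lo hi" "K \<subseteq> bp_closure a b c (seeds \<inter> K)"
  shows "K \<subseteq> bp_closure a b c (A \<inter> box lo hi)" "K \<subseteq> weak_enhancement a b c (A \<inter> box lo hi)"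
proof -
  have "seeds \<inter> K \<subseteq> A \<inter> box lo hi"
    using assms(1) by blast
  from assms(2) bp_closure_mono[OF this]
  show "K \<subseteq> bp_closure a b c (A \<inter> box lo hi)"
    by (rule order_trans)
  then show "K \<subseteq> weak_enhancement a b c (A \<inter> box lo hi)"
    by (auto simp: weak_enhancement_def Let_def)
qed

lemma linked_npath_in_weak_enhancement:
  assumes K: "K \<subseteq> cube" "K \<subseteq> box lo hi" "K \<subseteq> bp_closure a b c (seeds \<inter> K)"
    and "y \<in> K" "z \<in> K" "linked y z"
  shows "\<exists>ps. npath (weak_enhancement a b c (A \<inter> box lo hi) \<inter> box lo hi) y z ps"
proof -
  let ?C = "bp_closure a b c (A \<inter> box lo hi)"
  let ?E = "weak_enhancement a b c (A \<inter> box lo hi)"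
  note KC = spanned_subset_weak_enhancement(1)[OF K(2,3)]
  have KE: "K \<subseteq> ?E \<inter> box lo hi"
    using spanned_subset_weak_enhancement(2)[OF K(2,3)] K(2) by blast
  have segment: "{w. on_segment x u w} \<subseteq> ?E \<inter> box lo hi"
    if "x \<in> K" "x \<notin> seeds" "u \<in> nbhd a b c x" "u \<in> K" for x u
  proof -
    have "x \<in> ?C - A \<inter> box lo hi" "u \<in> nbhd a b c x \<inter> ?C"
      using that KC K(1) by auto
    then have "{w. on_segment x u w} \<subseteq> ?E"
      by (auto simp: weak_enhancement_def Let_def)
    moreover have "{w. on_segment x u w} \<subseteq> box lo hi"
      using on_segment_in_box[of x u _ lo hi] that(1,4) K(2) by blast
    ultimately show ?thesis
      by blast
  qed
  consider "nn_adj y z" | "y \<notin> seeds" "z \<in> nbhd a b c y" | "z \<notin> seeds" "y \<in> nbhd a b c z"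
    using \<open>linked y z\<close> unfolding linked_def by blast
  then show ?thesis
  proof cases
    case 1
    then have "npath (?E \<inter> box lo hi) y z [y, z]"
      using KE \<open>y \<in> K\<close> \<open>z \<in> K\<close> by (auto simp: npath_def)
    then show ?thesis ..
  next
    case 2
    obtain ps where "npath {w. on_segment y z w} y z ps"
      using nbhd_segment_npath[OF 2(2)] ..
    from npath_mono[OF this segment[OF \<open>y \<in> K\<close> 2 \<open>z \<in> K\<close>]] show ?thesis ..
  next
    case 3
    obtain ps where "npath {w. on_segment z y w} z y ps"
      using nbhd_segment_npath[OF 3(2)] ..
    from npath_rev[OF npath_mono[OF this segment[OF \<open>z \<in> K\<close> 3 \<open>y \<in> K\<close>]]] show ?thesis ..
  qed
qed

lemma cluster_crossed_subbox:
  assumes "grown D" "p \<in> D" and spanned: "cluster D p \<subseteq> bp_closure a b c (seeds \<inter> cluster D p)"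
  shows "crossed_subbox (bbox_lo (cluster D p)) (bbox_hi (cluster D p))"
proof -
  let ?K = "cluster D p"
  let ?lo = "bbox_lo ?K" and ?hi = "bbox_hi ?K"
  let ?S = "weak_enhancement a b c (A \<inter> box ?lo ?hi)"
  have "?K \<subseteq> cube" "finite ?K"
    using cluster_subset_cube[OF assms(1,2)] finite_cluster[OF assms(1,2)] .
  have "?K \<noteq> {}"
    using self_in_component[of p linked D] by blast
  have box: "?K \<subseteq> box ?lo ?hi"
    using subset_box_bbox[OF \<open>finite ?K\<close>] .
  have "p \<in> ?S \<inter> box ?lo ?hi"
    using spanned_subset_weak_enhancement(2)[OF box spanned] box self_in_component[of p linked D]
    by blast
  have "\<exists>ps. npath (?S \<inter> box ?lo ?hi) q q' ps" if "q \<in> ?K" "q' \<in> ?K" for q q'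
    by (rule npath_in_component[OF linked_npath_in_weak_enhancement[OF \<open>?K \<subseteq> cube\<close> box spanned]
          \<open>p \<in> ?S \<inter> box ?lo ?hi\<close> that])
  then have "internally_crossed ?S ?lo ?hi"
    using bbox_internally_crossed[OF \<open>finite ?K\<close> \<open>?K \<noteq> {}\<close>] by blast
  then show ?thesis
    unfolding crossed_subbox_def weakly_crossed_def
    using bbox_ordered[OF \<open>finite ?K\<close> \<open>?K \<noteq> {}\<close>] bbox_subset_box[OF \<open>finite ?K\<close> \<open>?K \<noteq> {}\<close> \<open>?K \<subseteq> cube\<close>]
    by blast
qed

definition crossed_at_all_scales :: "site set \<Rightarrow> bool" where
  "crossed_at_all_scales K \<longleftrightarrow>
     (\<forall>k::real. 1 \<le> k \<and> k \<le> real_of_int (extent K) \<longrightarrow>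
        (\<exists>lo hi. crossed_subbox lo hi \<and> k \<le> real_of_int (longest_side lo hi) \<and>
                 real_of_int (longest_side lo hi) \<le> 2 * k + 2 * real c))"

text \<open>If the merged cluster is too large at scale k, one of its extreme sites lies more than
  k + c away from the new site v, hence in an old cluster whose extent is already at least k.\<close>
lemma crossed_at_all_scales_merge:
  assumes "finite K" "v \<in> K" "crossed_subbox (bbox_lo K) (bbox_hi K)"
    and old: "\<And>q. q \<in> K \<Longrightarrow> q \<noteq> v \<Longrightarrow> \<exists>L w. finite L \<and> q \<in> L \<and> w \<in> L \<and>
                 (\<forall>d<3. \<bar>coord d v - coord d w\<bar> \<le> int c) \<and> crossed_at_all_scales L"
  shows "crossed_at_all_scales K"
  unfolding crossed_at_all_scales_def
proof (intro allI impI, elim conjE)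
  fix k :: real assume k: "1 \<le> k" "k \<le> real_of_int (extent K)"
  show "\<exists>lo hi. crossed_subbox lo hi \<and> k \<le> real_of_int (longest_side lo hi) \<and>
      real_of_int (longest_side lo hi) \<le> 2 * k + 2 * real c"
  proof (cases "real_of_int (extent K) \<le> 2 * k + 2 * real c")
    case True
    with assms(3) k(2) have "crossed_subbox (bbox_lo K) (bbox_hi K) \<and>
        k \<le> real_of_int (longest_side (bbox_lo K) (bbox_hi K)) \<and>
        real_of_int (longest_side (bbox_lo K) (bbox_hi K)) \<le> 2 * k + 2 * real c"
      by (simp add: extent_def)
    then show ?thesis
      by blast
  next
    case False
    obtain p q d where "p \<in> K" "q \<in> K" "d < 3" "extent K = coord d q - coord d p"
      using extent_attained[OF assms(1)] \<open>v \<in> K\<close> by blast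
    then obtain q' where q': "q' \<in> K" "k + real c < \<bar>real_of_int (coord d q' - coord d v)\<bar>"
      using False by (smt (verit) of_int_diff)
    then have "q' \<noteq> v"
      using k(1) by auto
    then obtain L w where L: "finite L" "q' \<in> L" "w \<in> L" "\<bar>coord d v - coord d w\<bar> \<le> int c"
      "crossed_at_all_scales L"
      using old[OF q'(1)] \<open>d < 3\<close> by blast
    have "k \<le> \<bar>real_of_int (coord d q' - coord d w)\<bar>"
      using q'(2) L(4) by linarith
    also have "\<dots> \<le> real_of_int (extent L)"
      using coord_dist_le_extent[OF L(1,2,3) \<open>d < 3\<close>] coord_dist_le_extent[OF L(1,3,2) \<open>d < 3\<close>]
      by linarith
    finally show ?thesis
      using L(5) k(1) unfolding crossed_at_all_scales_def by blast
  qed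
qed

definition good_cluster :: "site set \<Rightarrow> bool" where
  "good_cluster K \<longleftrightarrow> K \<subseteq> bp_closure a b c (seeds \<inter> K) \<and> crossed_at_all_scales K"

lemma cluster_insert_spanned:
  assumes v: "v \<in> seeds \<or> a + b + c \<le> card (nbhd a b c v \<inter> D)"
    and good: "\<forall>w\<in>D. good_cluster (cluster D w)"
  shows "cluster (insert v D) v \<subseteq> bp_closure a b c (seeds \<inter> cluster (insert v D) v)"
proof -
  let ?K = "cluster (insert v D) v"
  have old: "cluster D w \<subseteq> bp_closure a b c (seeds \<inter> ?K)" if "w \<in> D" "linked v w" for w
  proof -
    have "cluster D w \<subseteq> bp_closure a b c (seeds \<inter> cluster D w)"
      using good that(1) by (simp add: good_cluster_def)
    also have "\<dots> \<subseteq> bp_closure a b c (seeds \<inter> ?K)"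
      using component_subset_component_insert[of w D linked v, OF that] by (intro bp_closure_mono) blast
    finally show ?thesis .
  qed
  have "v \<in> bp_closure a b c (seeds \<inter> ?K)"
  proof (cases "v \<in> seeds")
    case True
    then have "v \<in> seeds \<inter> ?K"
      using self_in_component[of v linked "insert v D"] by blast
    then show ?thesis
      by (rule subsetD[OF subset_bp_closure])
  next
    case False
    have "nbhd a b c v \<inter> D \<subseteq> bp_closure a b c (seeds \<inter> ?K)"
    proof
      fix u assume u: "u \<in> nbhd a b c v \<inter> D"
      then have "linked v u"
        using False by (simp add: linked_def)
      then show "u \<in> bp_closure a b c (seeds \<inter> ?K)"
        using old[of u] u self_in_component[of u linked D] by blast
    qed
    with False v show ?thesis
      using mem_bp_closure_if_neighbours[of a b c v D] by auto
  qed
  then show ?thesis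
    using component_insert_subset[of linked v D] old by blast
qed

lemma good_cluster_insert:
  assumes "grown D" "v \<in> seeds \<or> a + b + c \<le> card (nbhd a b c v \<inter> D)"
    and good: "\<forall>w\<in>D. good_cluster (cluster D w)"
  shows "good_cluster (cluster (insert v D) v)"
proof -
  let ?K = "cluster (insert v D) v"
  have grown': "grown (insert v D)"
    using assms(1,2) by (rule grown_insert)
  have spanned: "?K \<subseteq> bp_closure a b c (seeds \<inter> ?K)"
    using cluster_insert_spanned[OF assms(2) good] .
  have old: "\<exists>L w. finite L \<and> q \<in> L \<and> w \<in> L \<and> (\<forall>d<3. \<bar>coord d v - coord d w\<bar> \<le> int c) \<and>
      crossed_at_all_scales L" if q: "q \<in> ?K" "q \<noteq> v" for q
  proof -
    obtain w where w: "w \<in> D" "linked v w" "q \<in> cluster D w"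
      using component_insert_subset[of linked v D] q by blast
    have "finite (cluster D w)"
      using finite_cluster[OF assms(1) w(1)] .
    moreover have "crossed_at_all_scales (cluster D w)"
      using good w(1) by (simp add: good_cluster_def)
    ultimately show ?thesis
      using w(3) self_in_component[of w linked D] coord_dist_le_if_linked[OF w(2)] by blast
  qed
  have "finite ?K"
    using finite_cluster[OF grown'] by blast
  then have "crossed_at_all_scales ?K"
    using crossed_at_all_scales_merge self_in_component[of v linked "insert v D"]
      cluster_crossed_subbox[OF grown' _ spanned] old
    by blast
  with spanned show ?thesis
    by (simp add: good_cluster_def)
qed

lemma good_clusters_grown: "grown D \<Longrightarrow> \<forall>p\<in>D. good_cluster (cluster D p)"
proof (induction rule: grown.induct)
  case (grown_insert D v)
  show ?case
  proof
    fix p assume p: "p \<in> insert v D"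
    show "good_cluster (cluster (insert v D) p)"
    proof (cases "v \<in> cluster (insert v D) p")
      case True
      have "good_cluster (cluster (insert v D) v)"
        using grown_insert by (intro good_cluster_insert) auto
      with component_eq[OF symp_linked True] show ?thesis
        by simp
    next
      case False
      then have "p \<in> D"
        using p self_in_component[of p linked "insert v D"] by blast
      then show ?thesis
        using component_insert_eq[OF False] grown_insert.IH by simp
    qed
  qed
qed simp

lemma axis_in_cluster:
  assumes "cube \<subseteq> D"
  shows "i \<le> l \<Longrightarrow> (int i, 0, 0) \<in> cluster D (0, 0, 0)"
proof (induction i)
  case (Suc i)
  have "linked (int i, 0, 0) (int (Suc i), 0, 0)"
    by (simp add: linked_def nn_adj_iff)
  then have "induced linked D (int i, 0, 0) (int (Suc i), 0, 0)"
    using assms Suc.prems by (simp add: induced_def mem_box_iff subset_iff)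
  with Suc show ?case
    by (simp add: component_def rtranclp.rtrancl_into_rtrancl)
qed (simp add: self_in_component)

lemma crossed_subbox_at_every_scale:
  assumes "internally_spanned a b c A cube" "1 \<le> k" "k \<le> real l"
  shows "\<exists>lo hi. crossed_subbox lo hi \<and> k \<le> real_of_int (longest_side lo hi) \<and>
           real_of_int (longest_side lo hi) \<le> 2 * k + 2 * real c"
proof -
  obtain n where n: "cube \<subseteq> (bp_step a b c ^^ n) seeds"
    using finite_subset_bp_iterate[OF finite_box] assms(1) unfolding internally_spanned_def by blast
  let ?D = "(bp_step a b c ^^ n) seeds"
  let ?K = "cluster ?D (0, 0, 0)"
  have "(0, 0, 0) \<in> ?D"
    using n by (auto simp: mem_box_iff)
  then have "good_cluster ?K" "finite ?K"
    using good_clusters_grown[OF grown_bp_iterate] finite_cluster[OF grown_bp_iterate] by blast+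
  then have "int l \<le> extent ?K"
    using coord_dist_le_extent[OF _ self_in_component axis_in_cluster[OF n order_refl], of 0] by simp
  then show ?thesis
    using \<open>good_cluster ?K\<close> assms(2,3) unfolding good_cluster_def crossed_at_all_scales_def by simp
qed

end

theorem lemma1:
  fixes a b c :: nat
  assumes "0 < a" and "a \<le> b" and "b \<le> c"
  shows "\<exists>K L :: real. K > 0 \<and>
    (\<forall>(l::nat) (A::site set).
       internally_spanned a b c A (box (0, 0, 0) (int l, int l, int l)) \<longrightarrow>
       (\<forall>k::real. 1 \<le> k \<and> k \<le> (real l - L) / K \<longrightarrow>
          (\<exists>lo hi. (\<forall>d<3. coord d lo \<le> coord d hi) \<and>
             box lo hi \<subseteq> box (0, 0, 0) (int l, int l, int l) \<and>
             k \<le> real_of_int (longest_side lo hi) \<and>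
             real_of_int (longest_side lo hi) \<le> K * k + L \<and>
             weakly_crossed a b c A lo hi)))"
proof (rule exI[of _ 2], rule exI[of _ "2 * real c"], intro conjI allI impI)
  fix l :: nat and A :: "site set" and k :: real
  assume spanned: "internally_spanned a b c A (box (0, 0, 0) (int l, int l, int l))"
    and k: "1 \<le> k \<and> k \<le> (real l - 2 * real c) / 2"
  interpret bootstrap_cube a b c A l
    using assms by unfold_locales
  have "2 * k \<le> real l - 2 * real c"
    using conjunct2[OF k] by (simp add: field_simps)
  then have "k \<le> real l"
    using conjunct1[OF k] by linarith
  then show "\<exists>lo hi. (\<forall>d<3. coord d lo \<le> coord d hi) \<and>
      box lo hi \<subseteq> box (0, 0, 0) (int l, int l, int l) \<and>
      k \<le> real_of_int (longest_side lo hi) \<and>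
      real_of_int (longest_side lo hi) \<le> 2 * k + 2 * real c \<and> weakly_crossed a b c A lo hi"
    using crossed_subbox_at_every_scale[OF spanned] k unfolding crossed_subbox_def by blast
qed simp

end
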